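(* Let $n\ge2$, $\alpha,\beta>0$ with $\alpha^2+\beta^2=1$ and $r=\alpha/\beta\in(0,1)$. Let $\mathcal E_\gamma$, $\gamma\in[0,1]$, be a family of single-qubit channels acting as $|0\rangle\langle0|\mapsto|0\rangle\langle0|$, $|1\rangle\langle1|\mapsto(1-\gamma)|1\rangle\langle1|+\gamma|0\rangle\langle0|$, $|0\rangle\langle1|\mapsto\lambda(\gamma)|0\rangle\langle1|$ with $\lambda(\gamma)\in\mathbb R$ and $\lambda(\gamma)^2\le1-\gamma$, and define $S(\gamma)=\lambda(\gamma)^2/(1-\gamma)$ for $\gamma\in[0,1)$. Let $\rho(\gamma)=\mathcal E_\gamma^{\otimes n}(|\psi_n\rangle\langle\psi_n|)$, $|\psi_n\rangle=\alpha|0^n\rangle+\beta|1^n\rangle$, so that $P_0=\alpha^2+\beta^2\gamma^n$, $P_n=\beta^2(1-\gamma)^n$, $|c|=\alpha\beta|\lambda(\gamma)|^n$. Suppose $\gamma_e\in(0,1)$ is the unique $\gamma\in(0,1)$ at which the partial-transpose block determinant $\beta^4[\gamma(1-\gamma)]^n-\alpha^2\beta^2\lambda(\gamma)^{2n}$ vanishes (the bipartite-negativity death threshold, which is the same for every bipartition), and $\gamma_+\in(0,1)$ is the unique $\gamma\in(0,1)$ with $|c(\gamma)|=P_n(\gamma)$ and $P_0(\gamma)\ge|c(\gamma)|$. Then $$r^{2/n}S(\gamma_e)=\gamma_e,\qquad r^{2/n}S(\gamma_+)=1-\gamma_+,$$ and $\gamma_e+\gamma_+=1$ holds if and only if $S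(\gamma_e)=S(1-\gamma_e)$.
   Context: Here $c=\langle0^n|\rho(\gamma)|1^n\rangle=\alpha\beta\lambda(\gamma)^n$, and $\rho(\gamma)$ lies in the real GHZ-$X$ manifold (diagonal in the computational basis except for the entry between $|0^n\rangle$ and $|1^n\rangle$). Pure amplitude damping is the case $\lambda=\sqrt{1-\gamma}$, $S\equiv1$. *)

theory Defs
  imports Complex_Main
begin

text \<open>Channel family parametrised by the real coherence factor lam(gamma).
  Quantities of the evolved GHZ-X state rho(gamma), as given in the paper.\<close>

definition S_fun :: "(real \<Rightarrow> real) \<Rightarrow> real \<Rightarrow> real" where
  "S_fun lam g = (lam g)^2 / (1 - g)"

definition P0 :: "real \<Rightarrow> real \<Rightarrow> nat \<Rightarrow> real \<Rightarrow> real" where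
  "P0 \<alpha> \<beta> n g = \<alpha>^2 + \<beta>^2 * g^n"

definition Pn :: "real \<Rightarrow> nat \<Rightarrow> real \<Rightarrow> real" where
  "Pn \<beta> n g = \<beta>^2 * (1 - g)^n"

text \<open>Coherence c = <0^n| rho |1^n> = alpha beta lam^n.\<close>
definition coh :: "real \<Rightarrow> real \<Rightarrow> (real \<Rightarrow> real) \<Rightarrow> nat \<Rightarrow> real \<Rightarrow> real" where
  "coh \<alpha> \<beta> lam n g = \<alpha> * \<beta> * (lam g)^n"

definition pt_det :: "real \<Rightarrow> real \<Rightarrow> (real \<Rightarrow> real) \<Rightarrow> nat \<Rightarrow> real \<Rightarrow> real" where
  "pt_det \<alpha> \<beta> lam n g = \<beta>^4 * (g * (1 - g))^n - \<alpha>^2 * \<beta>^2 * (lam g)^(2*n)"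

end

theory Submission
  imports Defs
begin

text \<open>Put \<open>r = \<alpha>/\<beta>\<close> and \<open>k = r powr (2/n)\<close>, so that \<open>k^n = r^2\<close>. Both defining equations
  are equalities of \<open>n\<close>-th powers of nonnegative reals, hence equivalent to equalities of the
  bases: \<open>pt_det = 0\<close> becomes \<open>g (1 - g) = k \<lambda>(g)^2\<close>, i.e. \<open>k S(g) = g\<close>, and \<open>|c| = P_n\<close>
  (after squaring) becomes \<open>k \<lambda>(g)^2 = (1 - g)^2\<close>, i.e. \<open>k S(g) = 1 - g\<close>. Hence
  \<open>\<gamma>\<^sub>e + \<gamma>\<^sub>+ = 1\<close> forces \<open>S(\<gamma>\<^sub>e) = \<gamma>\<^sub>e/k = S(1 - \<gamma>\<^sub>e)\<close>. Conversely, if \<open>S(\<gamma>\<^sub>e) = S(1 - \<gamma>\<^sub>e)\<close> then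
  \<open>1 - \<gamma>\<^sub>e\<close> solves \<open>|c| = P_n\<close>; since \<open>S \<le> 1\<close> gives \<open>\<gamma>\<^sub>e \<le> k\<close>, there \<open>P_n = \<beta>^2 \<gamma>\<^sub>e^n \<le> \<beta>^2 k^n = \<alpha>^2 \<le> P_0\<close>,
  so uniqueness of \<open>\<gamma>\<^sub>+\<close> yields \<open>\<gamma>\<^sub>+ = 1 - \<gamma>\<^sub>e\<close>.\<close>

lemma powr_divide_power:
  fixes x :: real
  assumes "x > 0" and "n > 0"
  shows "(x powr (real m / real n)) ^ n = x ^ m"
proof -
  have "(x powr (real m / real n)) ^ n = x powr (real n * (real m / real n))"
    using assms(1) by (simp add: powr_power)
  also have "\<dots> = x ^ m"
    using assms by (simp add: powr_realpow)
  finally show ?thesis .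
qed

lemma S_fun_le_1:
  assumes "(lam g)^2 \<le> 1 - g" and "g < 1"
  shows "S_fun lam g \<le> 1"
  using assms unfolding S_fun_def by simp

lemma mult_S_fun_eq_iff:
  assumes "g < 1"
  shows "k * S_fun lam g = c \<longleftrightarrow> k * (lam g)^2 = c * (1 - g)"
  using assms unfolding S_fun_def by (auto simp: field_simps)

lemma pt_det_eq_0_iff:
  fixes k :: real
  assumes "\<beta> \<noteq> 0" and "n > 0" and "k \<ge> 0" and "k ^ n = (\<alpha> / \<beta>)^2" and "g \<in> {0..<1}"
  shows "pt_det \<alpha> \<beta> lam n g = 0 \<longleftrightarrow> k * S_fun lam g = g"
proof -
  have "pt_det \<alpha> \<beta> lam n g = \<beta>^4 * (g * (1 - g))^n - \<alpha>^2 * \<beta>^2 * ((lam g)^2)^n"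
    unfolding pt_det_def by (simp add: power_mult)
  then have "pt_det \<alpha> \<beta> lam n g = 0 \<longleftrightarrow> (g * (1 - g))^n = (\<alpha> / \<beta>)^2 * ((lam g)^2)^n"
    using assms(1) by (auto simp: field_simps eval_nat_numeral)
  also have "\<dots> \<longleftrightarrow> (g * (1 - g))^n = (k * (lam g)^2)^n"
    by (simp add: power_mult_distrib assms(4))
  also have "\<dots> \<longleftrightarrow> g * (1 - g) = k * (lam g)^2"
    using assms(2,3,5) by (intro power_eq_iff_eq_base) auto
  also have "\<dots> \<longleftrightarrow> k * S_fun lam g = g"
    using assms(5) by (auto simp: mult_S_fun_eq_iff)
  finally show ?thesis .
qed

lemma abs_coh_eq_Pn_iff:
  fixes k :: real
  assumes "\<alpha> > 0" and "\<beta> > 0" and "n > 0" and "k \<ge> 0" and "k ^ n = (\<alpha> / \<beta>)^2"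
    and "g < 1"
  shows "\<bar>coh \<alpha> \<beta> lam n g\<bar> = Pn \<beta> n g \<longleftrightarrow> k * S_fun lam g = 1 - g"
proof -
  have lhs_sq: "(\<alpha> / \<beta> * \<bar>lam g\<bar>^n)^2 = (k * (lam g)^2)^n"
    using assms(5)
    by (metis power_even_abs_numeral even_numeral power_mult power_mult_distrib mult.commute)
  have rhs_sq: "((1 - g)^n)^2 = ((1 - g)^2)^n"
    by (metis power_mult mult.commute)
  have "\<bar>coh \<alpha> \<beta> lam n g\<bar> = Pn \<beta> n g \<longleftrightarrow> \<alpha> / \<beta> * \<bar>lam g\<bar>^n = (1 - g)^n"
    using assms(1,2) unfolding coh_def Pn_def
    by (auto simp: abs_mult power_abs field_simps power2_eq_square)
  also have "\<dots> \<longleftrightarrow> (\<alpha> / \<beta> * \<bar>lam g\<bar>^n)^2 = ((1 - g)^n)^2"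
    using assms(1,2,6) by (intro power_eq_iff_eq_base[symmetric]) auto
  also have "\<dots> \<longleftrightarrow> k * (lam g)^2 = (1 - g)^2"
    unfolding lhs_sq rhs_sq using assms(3,4) by (intro power_eq_iff_eq_base) auto
  also have "\<dots> \<longleftrightarrow> k * S_fun lam g = 1 - g"
    using assms(6) by (simp add: mult_S_fun_eq_iff power2_eq_square)
  finally show ?thesis .
qed

lemma Pn_le_P0:
  fixes k :: real
  assumes "\<beta> \<noteq> 0" and "k ^ n = (\<alpha> / \<beta>)^2" and "g \<in> {0..1}" and "1 - g \<le> k"
  shows "Pn \<beta> n g \<le> P0 \<alpha> \<beta> n g"
proof -
  have "(1 - g)^n \<le> k^n"
    using assms(3,4) by (intro power_mono) auto
  then have "\<beta>^2 * (1 - g)^n \<le> \<beta>^2 * (\<alpha> / \<beta>)^2"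
    using assms(2) by (simp add: mult_left_mono)
  also have "\<dots> = \<alpha>^2"
    using assms(1) by (simp add: power_divide)
  finally show ?thesis
    using assms(3) unfolding Pn_def P0_def by (simp add: add_increasing2)
qed

lemma coherence_threshold_at_complement:
  fixes k :: real
  assumes "\<alpha> > 0" and "\<beta> > 0" and "n > 0" and "k > 0" and "k ^ n = (\<alpha> / \<beta>)^2"
    and "g \<in> {0<..<1}" and "(lam g)^2 \<le> 1 - g"
    and "k * S_fun lam g = g" and "S_fun lam g = S_fun lam (1 - g)"
  shows "\<bar>coh \<alpha> \<beta> lam n (1 - g)\<bar> = Pn \<beta> n (1 - g)"
    and "\<bar>coh \<alpha> \<beta> lam n (1 - g)\<bar> \<le> P0 \<alpha> \<beta> n (1 - g)"
proof -
  show coh_eq: "\<bar>coh \<alpha> \<beta> lam n (1 - g)\<bar> = Pn \<beta> n (1 - g)"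
    using abs_coh_eq_Pn_iff[OF assms(1-3) less_imp_le[OF assms(4)] assms(5)] assms(6,8,9)
    by auto
  have "S_fun lam g \<le> 1"
    using S_fun_le_1 assms(6,7) by force
  then have "g \<le> k"
    using assms(4,8) by (metis mult_left_le less_imp_le)
  then show "\<bar>coh \<alpha> \<beta> lam n (1 - g)\<bar> \<le> P0 \<alpha> \<beta> n (1 - g)"
    unfolding coh_eq using Pn_le_P0[OF _ assms(5)] assms(2,6) by auto
qed

theorem proposition1:
  fixes \<alpha> \<beta> ge gp :: real and n :: nat and lam :: "real \<Rightarrow> real"
  assumes "n \<ge> 2"
    and "\<alpha> > 0" and "\<beta> > 0" and "\<alpha>^2 + \<beta>^2 = 1"
    and "\<alpha> / \<beta> < 1"
    and "\<forall>g\<in>{0..1}. (lam g)^2 \<le> 1 - g"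
    and "ge \<in> {0<..<1}" and "pt_det \<alpha> \<beta> lam n ge = 0"
    and "\<forall>g\<in>{0<..<1}. pt_det \<alpha> \<beta> lam n g = 0 \<longrightarrow> g = ge"
    and "gp \<in> {0<..<1}" and "\<bar>coh \<alpha> \<beta> lam n gp\<bar> = Pn \<beta> n gp"
    and "P0 \<alpha> \<beta> n gp \<ge> \<bar>coh \<alpha> \<beta> lam n gp\<bar>"
    and "\<forall>g\<in>{0<..<1}. \<bar>coh \<alpha> \<beta> lam n g\<bar> = Pn \<beta> n g
            \<and> P0 \<alpha> \<beta> n g \<ge> \<bar>coh \<alpha> \<beta> lam n g\<bar> \<longrightarrow> g = gp"
  shows "(\<alpha> / \<beta>) powr (2 / real n) * S_fun lam ge = ge
       \<and> (\<alpha> / \<beta>) powr (2 / real n) * S_fun lam gp = 1 - gp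
       \<and> (ge + gp = 1 \<longleftrightarrow> S_fun lam ge = S_fun lam (1 - ge))"
proof -
  define k where "k = (\<alpha> / \<beta>) powr (2 / real n)"
  have n_pos: "n > 0" using assms(1) by simp
  have k_pos: "k > 0" using assms(2,3) by (simp add: k_def)
  have k_power: "k ^ n = (\<alpha> / \<beta>)^2"
    using powr_divide_power[of "\<alpha> / \<beta>" n 2] assms(2,3) n_pos by (simp add: k_def)
  have ge: "k * S_fun lam ge = ge"
    using pt_det_eq_0_iff[OF _ n_pos less_imp_le[OF k_pos] k_power] assms(3,7,8) by auto
  have gp: "k * S_fun lam gp = 1 - gp"
    using abs_coh_eq_Pn_iff[OF assms(2,3) n_pos less_imp_le[OF k_pos] k_power] assms(10,11)
    by auto
  have "ge + gp = 1" if "S_fun lam ge = S_fun lam (1 - ge)"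
    using coherence_threshold_at_complement[OF assms(2,3) n_pos k_pos k_power _ _ ge that]
      assms(6,7,13) by force
  moreover have "S_fun lam ge = S_fun lam (1 - ge)" if "ge + gp = 1"
  proof -
    have "k * S_fun lam ge = k * S_fun lam (1 - ge)"
      using ge gp unfolding that[symmetric] by simp
    then show ?thesis
      using k_pos by simp
  qed
  ultimately show ?thesis
    using ge gp by (auto simp: k_def)
qed

end
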